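(* For $a\in\mathbb R\setminus\{0,1\}$, let $\mathfrak g_a$ be the $7$-dimensional nilpotent Lie algebra with basis $\{e_1,\dots,e_7\}$ and dual basis $\{e^i\}$ satisfying $$de^1=de^2=de^3=0,\ de^4=(a-1)e^{12},\ de^5=ae^{13},\ de^6=e^{23},\ de^7=e^{16}+e^{25}+e^{34}.$$ Then the set $\mathbf S$ of signatures of diagonal metrics satisfying $\operatorname{Ric}=-\frac12\mathrm{id}+\frac12N$ is: for $a<0$: $\{\emptyset,12357,12367,1237,126,125,1256,134,13456,1346,14567,1457,147,234,2345,23456,24567,2467,247,3567,357,367,5,6\}$; for $0<a<1$: $\{\emptyset,12347,1237,12357,12456,1256,126,13456,1346,136,1457,147,157,234,2345,235,24567,2467,267,34567,3567,367,4,5\}$; for $a>1$: $\{\emptyset,12347,12367,1237,12456,125,1256,134,1346,136,14567,1457,157,2345,23456,235,2467,247,267,34567,3567,357,4,6\}$.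
   Context: $d$ is the Chevalley–Eilenberg differential and $e^{ij}=e^i\wedge e^j$; the basis $\{e_i\}$ is a nice basis. The root matrix $M_\Delta$ has one row for each triple $(\{i,j\},k)$ with $[e_i,e_j]$ a nonzero multiple of $e_k$, with $+1$ in position $k$, $-1$ in positions $i,j$, $0$ elsewhere. $N$ is the diagonal Nikolayevsky derivation: the diagonal matrix with diagonal $M_\Delta^Tb+[1]$, where $b$ solves $M_\Delta M_\Delta^Tb=[1]$, $[1]$ the all-ones vector. A diagonal metric is $\sum_ig_ie^i\otimes e^i$, $g_i\neq0$, with Ricci operator $\operatorname{Ric}$. A signature is recorded as the string of indices $i$ with $g_i<0$; $\emptyset$ denotes positive definite. *)

theory Defs
  imports Complex_Main
begin

(* Lie algebra on R^n with basis e_1..e_n given by structure constants: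
   [e_i, e_j] = sum_k c i j k * e_k.
   Metric: diagonal, g(e_i,e_i) = g i. *)

(* Levi-Civita connection via Koszul:  nabla_{e_i} e_j = sum_k lc c g i j k * e_k *)
definition lc :: "(nat \<Rightarrow> nat \<Rightarrow> nat \<Rightarrow> real) \<Rightarrow> (nat \<Rightarrow> real) \<Rightarrow> nat \<Rightarrow> nat \<Rightarrow> nat \<Rightarrow> real" where
  "lc c g i j k = (c i j k * g k - c j k i * g i + c k i j * g j) / (2 * g k)"

(* R(e_i,e_j) e_l = nabla_i nabla_j e_l - nabla_j nabla_i e_l - nabla_[e_i,e_j] e_l; component m *)
definition curv :: "nat \<Rightarrow> (nat \<Rightarrow> nat \<Rightarrow> nat \<Rightarrow> real) \<Rightarrow> (nat \<Rightarrow> real) \<Rightarrow> nat \<Rightarrow> nat \<Rightarrow> nat \<Rightarrow> nat \<Rightarrow> real" where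
  "curv n c g i j l m =
     (\<Sum>k=1..n. lc c g j l k * lc c g i k m - lc c g i l k * lc c g j k m)
     - (\<Sum>k=1..n. c i j k * lc c g k l m)"

definition ric_form :: "nat \<Rightarrow> (nat \<Rightarrow> nat \<Rightarrow> nat \<Rightarrow> real) \<Rightarrow> (nat \<Rightarrow> real) \<Rightarrow> nat \<Rightarrow> nat \<Rightarrow> real" where
  "ric_form n c g j l = (\<Sum>i=1..n. curv n c g i j l i)"

(* Ricci operator: Ric(e_j) = sum_l ric_op n c g l j * e_l, with g(Ric X, Y) = ric(X,Y) *)
definition ric_op :: "nat \<Rightarrow> (nat \<Rightarrow> nat \<Rightarrow> nat \<Rightarrow> real) \<Rightarrow> (nat \<Rightarrow> real) \<Rightarrow> nat \<Rightarrow> nat \<Rightarrow> real" where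
  "ric_op n c g l j = ric_form n c g j l / g l"

(* index set of rows of the root matrix: triples ({i,j},k), encoded with i<j *)
definition roots :: "nat \<Rightarrow> (nat \<Rightarrow> nat \<Rightarrow> nat \<Rightarrow> real) \<Rightarrow> (nat \<times> nat \<times> nat) set" where
  "roots n c = {(i,j,k). i \<in> {1..n} \<and> j \<in> {1..n} \<and> k \<in> {1..n} \<and> i < j \<and> c i j k \<noteq> 0}"

definition rootrow :: "nat \<times> nat \<times> nat \<Rightarrow> nat \<Rightarrow> real" where
  "rootrow r m = (case r of (i,j,k) \<Rightarrow>
      (if m = k then 1 else 0) - (if m = i then 1 else 0) - (if m = j then 1 else 0))"

definition is_nik :: "nat \<Rightarrow> (nat \<Rightarrow> nat \<Rightarrow> nat \<Rightarrow> real) \<Rightarrow> (nat \<Rightarrow> real) \<Rightarrow> bool" where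
  "is_nik n c N \<longleftrightarrow> (\<exists>b :: nat \<times> nat \<times> nat \<Rightarrow> real.
      (\<forall>r\<in>roots n c. (\<Sum>m=1..n. rootrow r m * (\<Sum>r'\<in>roots n c. rootrow r' m * b r')) = 1)
    \<and> (\<forall>m\<in>{1..n}. N m = (\<Sum>r\<in>roots n c. rootrow r m * b r) + 1))"

definition nik :: "nat \<Rightarrow> (nat \<Rightarrow> nat \<Rightarrow> nat \<Rightarrow> real) \<Rightarrow> nat \<Rightarrow> real" where
  "nik n c = (SOME N. is_nik n c N)"

definition sigs :: "nat \<Rightarrow> (nat \<Rightarrow> nat \<Rightarrow> nat \<Rightarrow> real) \<Rightarrow> nat set set" where
  "sigs n c = {{i \<in> {1..n}. g i < 0} | g.
      (\<forall>i\<in>{1..n}. g i \<noteq> 0) \<and>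
      (\<forall>l\<in>{1..n}. \<forall>j\<in>{1..n}.
          ric_op n c g l j = (if l = j then - 1/2 + 1/2 * nik n c j else 0))}"

(* the Lie algebra g_a: de^k = sum_{i<j} dcoef a k i j e^{ij} *)
definition dcoef :: "real \<Rightarrow> nat \<Rightarrow> nat \<Rightarrow> nat \<Rightarrow> real" where
  "dcoef a k i j =
     (if (k,i,j) = (4,1,2) then a - 1
      else if (k,i,j) = (5,1,3) then a
      else if (k,i,j) = (6,2,3) then 1
      else if (k,i,j) = (7,1,6) then 1
      else if (k,i,j) = (7,2,5) then 1
      else if (k,i,j) = (7,3,4) then 1
      else 0)"

(* structure constants via de^k(X,Y) = - e^k([X,Y]) *)
definition ga :: "real \<Rightarrow> nat \<Rightarrow> nat \<Rightarrow> nat \<Rightarrow> real" where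
  "ga a i j k = (if i < j then - dcoef a k i j else if j < i then dcoef a k j i else 0)"

end

theory Submission
  imports Defs
begin

(* In the nice basis the Ricci operator of a diagonal metric g is diagonal, Ric = 1/2 M_Delta^T w,
   where w gives the root (i,j,k) the weight (c_ij^k)^2 g_k / (g_i g_j), and the Nikolayevsky
   derivation is N = diag(1/2,1/2,1/2,1,1,1,3/2).  So Ric = -1/2 id + 1/2 N is a linear condition
   on w: the roots (3,4,7), (2,5,7), (1,6,7) carry the same weights p, q, t as (1,2,4), (1,3,5),
   (2,3,6), and p + q + t = 1/2.  Given g_1, g_2, g_3, the weights p, q, t determine g_4, g_5, g_6,
   and each of the three roots ending in 7 determines g_7; these three values agree iff
   q^2 = a^2 t^2 and p^2 = (a - 1)^2 t^2, which leaves three solutions (p, q, t).  As g_1, g_2, g_3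
   are free, a signature is fixed by their signs and those of p, q, t, and the latter depend only on
   the position of a relative to 0 and 1. *)

lemma sum_atLeastAtMost_1_7:
  "(\<Sum>i=1..7::nat. f i) = f 1 + f 2 + f 3 + f 4 + f 5 + f 6 + (f 7 :: real)"
  by (simp add: numeral_eq_Suc atLeastAtMostSuc_conv add.commute add.left_commute)

lemma atLeastAtMost_1_7_iff:
  "(i::nat) \<in> {1..7} \<longleftrightarrow> i = 1 \<or> i = 2 \<or> i = 3 \<or> i = 4 \<or> i = 5 \<or> i = 6 \<or> i = 7"
  by auto

lemma ball_atLeastAtMost_1_7:
  "(\<forall>i\<in>{1..7::nat}. P i) \<longleftrightarrow> P 1 \<and> P 2 \<and> P 3 \<and> P 4 \<and> P 5 \<and> P 6 \<and> P 7"
  unfolding Ball_def atLeastAtMost_1_7_iff by blast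

lemma Collect_atLeastAtMost_1_7:
  "{i \<in> {1..7::nat}. P i} =
     (if P 1 then {1} else {}) \<union> (if P 2 then {2} else {}) \<union> (if P 3 then {3} else {}) \<union>
     (if P 4 then {4} else {}) \<union> (if P 5 then {5} else {}) \<union> (if P 6 then {6} else {}) \<union>
     (if P 7 then {7} else {})"
  by (auto simp: numeral_eq_Suc atLeastAtMostSuc_conv split: if_splits)

lemma is_nik_unique:
  assumes "is_nik n c N" and "is_nik n c N'" and "m \<in> {1..n}"
  shows "N m = N' m"
proof -
  let ?R = "roots n c"
  obtain b b' where
    b: "\<forall>r\<in>?R. (\<Sum>m=1..n. rootrow r m * (\<Sum>r'\<in>?R. rootrow r' m * b r')) = 1"
      "\<forall>m\<in>{1..n}. N m = (\<Sum>r\<in>?R. rootrow r m * b r) + 1" and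
    b': "\<forall>r\<in>?R. (\<Sum>m=1..n. rootrow r m * (\<Sum>r'\<in>?R. rootrow r' m * b' r')) = 1"
      "\<forall>m\<in>{1..n}. N' m = (\<Sum>r\<in>?R. rootrow r m * b' r) + 1"
    using assms(1,2) unfolding is_nik_def by blast
  (* M M^T (b - b') = 0 forces |M^T (b - b')|^2 = 0 *)
  define v where "v m = (\<Sum>r\<in>?R. rootrow r m * (b r - b' r))" for m
  have v_diff: "v m = (\<Sum>r\<in>?R. rootrow r m * b r) - (\<Sum>r\<in>?R. rootrow r m * b' r)" for m
    by (simp add: v_def right_diff_distrib sum_subtractf)
  have v_orth: "(\<Sum>m=1..n. rootrow r m * v m) = 0" if "r \<in> ?R" for r
    using b(1) b'(1) that by (simp add: v_diff right_diff_distrib sum_subtractf)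
  have v_sq: "v m * v m = (\<Sum>r\<in>?R. (b r - b' r) * (rootrow r m * v m))" for m
  proof -
    have "v m * v m = (\<Sum>r\<in>?R. rootrow r m * (b r - b' r)) * v m"
      by (simp only: v_def)
    also have "\<dots> = (\<Sum>r\<in>?R. (b r - b' r) * (rootrow r m * v m))"
      by (simp add: sum_distrib_left mult_ac)
    finally show ?thesis .
  qed
  have "(\<Sum>m=1..n. (v m)\<^sup>2) = (\<Sum>r\<in>?R. (b r - b' r) * (\<Sum>m=1..n. rootrow r m * v m))"
    unfolding power2_eq_square v_sq sum_distrib_left by (rule sum.swap)
  also have "\<dots> = 0" using v_orth by simp
  finally have "v m = 0"
    using assms(3) by (simp add: sum_nonneg_eq_0_iff)
  then show ?thesis
    using b(2) b'(2) assms(3) by (simp add: v_diff)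
qed

lemma nik_eqI:
  assumes "is_nik n c N" and "m \<in> {1..n}"
  shows "nik n c m = N m"
  using is_nik_unique[OF someI[of "is_nik n c", OF assms(1)] assms(1,2)]
  unfolding nik_def .

lemma roots_ga:
  assumes "a \<noteq> 0" "a \<noteq> 1"
  shows "roots 7 (ga a) = {(1,2,4), (1,3,5), (2,3,6), (1,6,7), (2,5,7), (3,4,7)}"
  using assms by (auto simp: roots_def ga_def dcoef_def split: if_splits)

definition root_weight ::
    "(nat \<Rightarrow> nat \<Rightarrow> nat \<Rightarrow> real) \<Rightarrow> (nat \<Rightarrow> real) \<Rightarrow> nat \<times> nat \<times> nat \<Rightarrow> real" where
  "root_weight c g r = (case r of (i, j, k) \<Rightarrow> (c i j k)\<^sup>2 * g k / (g i * g j))"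

lemma ric_op_ga:
  assumes "a \<noteq> 0" "a \<noteq> 1" and nz: "\<forall>i\<in>{1..7}. g i \<noteq> 0"
    and "l \<in> {1..7}" "j \<in> {1..7}"
  shows "ric_op 7 (ga a) g l j =
    (if l = j then (\<Sum>r\<in>roots 7 (ga a). rootrow r j * root_weight (ga a) g r) / 2 else 0)"
proof -
  have nz': "g 1 \<noteq> 0" "g 2 \<noteq> 0" "g 3 \<noteq> 0" "g 4 \<noteq> 0" "g 5 \<noteq> 0" "g 6 \<noteq> 0" "g 7 \<noteq> 0"
    using nz unfolding ball_atLeastAtMost_1_7 by auto
  show ?thesis
    using assms(4,5) unfolding roots_ga[OF assms(1,2)] atLeastAtMost_1_7_iff
      ric_op_def ric_form_def curv_def sum_atLeastAtMost_1_7
    apply (elim disjE)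
    apply (simp_all only:)
    apply (simp_all add: lc_def ga_def dcoef_def rootrow_def root_weight_def nz')
    apply (simp_all add: field_simps nz' nz'(1)[unfolded One_nat_def] power2_eq_square)
    done
qed

definition nik_ga :: "nat \<Rightarrow> real" where
  "nik_ga m = (if m \<le> 3 then 1/2 else if m \<le> 6 then 1 else 3/2)"

lemma is_nik_ga:
  assumes "a \<noteq> 0" "a \<noteq> 1"
  shows "is_nik 7 (ga a) nik_ga"
  unfolding is_nik_def roots_ga[OF assms]
  by (rule exI[of _ "\<lambda>r. if r = (2,3,6) \<or> r = (1,6,7) then 1/2 else 0"])
    (simp add: ball_atLeastAtMost_1_7 sum_atLeastAtMost_1_7 rootrow_def nik_ga_def
      del: One_nat_def)

lemma nik_7_ga:
  assumes "a \<noteq> 0" "a \<noteq> 1" and "m \<in> {1..7}"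
  shows "nik 7 (ga a) m = nik_ga m"
  using nik_eqI[OF is_nik_ga[OF assms(1,2)] assms(3)] .

definition soliton_weights_ga :: "(nat \<times> nat \<times> nat \<Rightarrow> real) \<Rightarrow> bool" where
  "soliton_weights_ga w \<longleftrightarrow>
     w (1,6,7) = w (2,3,6) \<and> w (2,5,7) = w (1,3,5) \<and> w (3,4,7) = w (1,2,4) \<and>
     w (1,2,4) + w (1,3,5) + w (2,3,6) = 1/2"

lemma ric_soliton_ga_iff:
  assumes "a \<noteq> 0" "a \<noteq> 1" and "\<forall>i\<in>{1..7}. g i \<noteq> 0"
  shows "(\<forall>l\<in>{1..7}. \<forall>j\<in>{1..7}.
            ric_op 7 (ga a) g l j = (if l = j then - 1/2 + 1/2 * nik 7 (ga a) j else 0))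
         \<longleftrightarrow> soliton_weights_ga (root_weight (ga a) g)"
proof -
  have "(\<forall>l\<in>{1..7}. \<forall>j\<in>{1..7}.
            ric_op 7 (ga a) g l j = (if l = j then - 1/2 + 1/2 * nik 7 (ga a) j else 0))
        \<longleftrightarrow> (\<forall>m\<in>{1..7}. (\<Sum>r\<in>roots 7 (ga a). rootrow r m * root_weight (ga a) g r) / 2
                          = - 1/2 + 1/2 * nik_ga m)"
    using ric_op_ga[OF assms] nik_7_ga[OF assms(1,2)] by auto
  also have "\<dots> \<longleftrightarrow> soliton_weights_ga (root_weight (ga a) g)"
    unfolding roots_ga[OF assms(1,2)] ball_atLeastAtMost_1_7 soliton_weights_ga_def
    by (simp add: rootrow_def nik_ga_def) linarith
  finally show ?thesis .
qed

definition weight_solutions :: "real \<Rightarrow> (real \<times> real \<times> real) set" where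
  "weight_solutions a =
     {((a - 1) / (4 * a), 1/4, 1 / (4 * a)), ((1 - a) / 4, a / 4, 1/4),
      (1/4, - a / (4 * (1 - a)), 1 / (4 * (1 - a)))}"

lemma weight_solutions_eqs:
  assumes "a \<noteq> 0" "a \<noteq> 1" and "(p, q, t) \<in> weight_solutions a"
  shows "p + q + t = 1/2 \<and> q\<^sup>2 = a\<^sup>2 * t\<^sup>2 \<and> p\<^sup>2 = (a - 1)\<^sup>2 * t\<^sup>2"
proof -
  have a1: "a - 1 \<noteq> 0" "1 - a \<noteq> 0" using assms(1,2) by auto
  from assms(3) consider "p = (a - 1) / (4 * a)" "q = 1/4" "t = 1 / (4 * a)"
    | "p = (1 - a) / 4" "q = a / 4" "t = 1/4"
    | "p = 1/4" "q = - a / (4 * (1 - a))" "t = 1 / (4 * (1 - a))"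
    unfolding weight_solutions_def by auto
  then show ?thesis
  proof cases
    case 1
    show ?thesis unfolding 1 using assms(1) a1 by (simp add: field_simps power2_eq_square)
  next
    case 2
    show ?thesis unfolding 2 using a1 by (simp add: field_simps power2_eq_square)
  next
    case 3
    have q: "q = - (a * t)" using 3 by simp
    have t: "(1 - a) * t = 1/4" using 3 a1 by simp
    have p: "p = (1 - a) * t" using 3(1) t by simp
    show ?thesis unfolding p q using t by (simp add: power2_eq_square algebra_simps)
  qed
qed

lemma mem_weight_solutionsI:
  assumes "a \<noteq> 0" "a \<noteq> 1"
    and sum: "p + q + t = 1/2" and "q\<^sup>2 = a\<^sup>2 * t\<^sup>2" "p\<^sup>2 = (a - 1)\<^sup>2 * t\<^sup>2"
  shows "(p, q, t) \<in> weight_solutions a"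
proof -
  have "q = a * t \<or> q = - (a * t)" and "p = (a - 1) * t \<or> p = - ((a - 1) * t)"
    using assms(4,5) by (metis power_mult_distrib power2_eq_iff)+
  then show ?thesis
  proof (elim disjE)
    assume "q = a * t" "p = (a - 1) * t"
    with sum have "t = 1 / (4 * a)" using assms(1) by (simp add: field_simps)
    with \<open>q = a * t\<close> \<open>p = (a - 1) * t\<close> show ?thesis
      using assms(1,2) by (simp add: weight_solutions_def)
  next
    assume "q = a * t" "p = - ((a - 1) * t)"
    with sum have "t = 1/4" by (simp add: field_simps)
    with \<open>q = a * t\<close> \<open>p = - ((a - 1) * t)\<close> show ?thesis
      by (simp add: weight_solutions_def field_simps)
  next
    assume "q = - (a * t)" "p = (a - 1) * t"
    with sum show ?thesis by (simp add: field_simps)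
  next
    assume q: "q = - (a * t)" and "p = - ((a - 1) * t)"
    then have p: "p = (1 - a) * t" by (simp add: algebra_simps)
    have "(1 - a) * t = 1/4" using sum unfolding p q by (simp add: algebra_simps)
    then have "p = 1/4" and "t = 1 / (4 * (1 - a))" using p assms(2) by (simp_all add: field_simps)
    with q show ?thesis by (simp add: weight_solutions_def)
  qed
qed

lemma weight_solutions_nonzero:
  assumes "a \<noteq> 0" "a \<noteq> 1" and "(p, q, t) \<in> weight_solutions a"
  shows "p \<noteq> 0" "q \<noteq> 0" "t \<noteq> 0"
  using assms by (auto simp: weight_solutions_def)

(* g_1, g_2, g_3 are free, the roots (1,2,4), (1,3,5), (2,3,6) get the weights p, q, t, and g_7 is
   chosen so that (1,6,7) also has weight t. *)
definition metric_ga ::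
    "real \<Rightarrow> real \<Rightarrow> real \<Rightarrow> real \<Rightarrow> real \<times> real \<times> real \<Rightarrow> nat \<Rightarrow> real" where
  "metric_ga a g1 g2 g3 s i = (case s of (p, q, t) \<Rightarrow>
     if i = 1 then g1 else if i = 2 then g2 else if i = 3 then g3
     else if i = 4 then p * g1 * g2 / (a - 1)\<^sup>2 else if i = 5 then q * g1 * g3 / a\<^sup>2
     else if i = 6 then t * g2 * g3 else t\<^sup>2 * g1 * g2 * g3)"

lemma root_weight_metric_ga:
  assumes "a \<noteq> 0" "a \<noteq> 1" and "g1 \<noteq> 0" "g2 \<noteq> 0" "g3 \<noteq> 0" and "p \<noteq> 0" "q \<noteq> 0" "t \<noteq> 0"
  defines "w \<equiv> root_weight (ga a) (metric_ga a g1 g2 g3 (p, q, t))"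
  shows "w (1,2,4) = p" "w (1,3,5) = q" "w (2,3,6) = t"
    and "w (1,6,7) = t" "w (2,5,7) = a\<^sup>2 * t\<^sup>2 / q" "w (3,4,7) = (a - 1)\<^sup>2 * t\<^sup>2 / p"
proof -
  have "a - 1 \<noteq> 0" using assms by simp
  then show "w (1,2,4) = p" "w (1,3,5) = q" "w (2,3,6) = t"
    "w (2,5,7) = a\<^sup>2 * t\<^sup>2 / q" "w (3,4,7) = (a - 1)\<^sup>2 * t\<^sup>2 / p"
    using assms by (simp_all add: w_def root_weight_def metric_ga_def ga_def dcoef_def field_simps)
  show "w (1,6,7) = t"
    using assms by (simp add: w_def root_weight_def metric_ga_def ga_def dcoef_def
        field_simps power2_eq_square)
qed

lemma soliton_weights_ga_imp_metric_ga:
  assumes a: "a \<noteq> 0" "a \<noteq> 1" and nz: "\<forall>i\<in>{1..7}. g i \<noteq> 0"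
    and "soliton_weights_ga (root_weight (ga a) g)"
  obtains s where "s \<in> weight_solutions a"
    and "\<forall>i\<in>{1..7}. g i = metric_ga a (g 1) (g 2) (g 3) s i"
proof -
  define w where "w = root_weight (ga a) g"
  define p q t where "p = w (1,2,4)" and "q = w (1,3,5)" and "t = w (2,3,6)"
  define m where "m = metric_ga a (g 1) (g 2) (g 3) (p, q, t)"
  have W: "w (1,6,7) = t" "w (2,5,7) = q" "w (3,4,7) = p" "p + q + t = 1/2"
    using assms(4) by (simp_all add: w_def p_def q_def t_def soliton_weights_ga_def)
  have g: "g 1 \<noteq> 0" "g 2 \<noteq> 0" "g 3 \<noteq> 0" "g 4 \<noteq> 0" "g 5 \<noteq> 0" "g 6 \<noteq> 0" "g 7 \<noteq> 0"
    using nz unfolding ball_atLeastAtMost_1_7 by auto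
  have "a - 1 \<noteq> 0" using a by simp
  then have p: "g 4 = p * g 1 * g 2 / (a - 1)\<^sup>2" and q: "g 5 = q * g 1 * g 3 / a\<^sup>2"
    and t: "g 6 = t * g 2 * g 3"
    using a g by (simp_all add: p_def q_def t_def w_def root_weight_def ga_def dcoef_def field_simps)
  have pqt: "p \<noteq> 0" "q \<noteq> 0" "t \<noteq> 0"
    using g(4-6) unfolding p q t by auto
  have "g 7 = t * g 1 * g 6"
    using W(1) g by (simp add: w_def root_weight_def ga_def dcoef_def field_simps)
  then have agree: "\<forall>i\<in>{1..7}. g i = m i"
    unfolding ball_atLeastAtMost_1_7 m_def metric_ga_def using p q t
    by (simp add: power2_eq_square)
  then have "w (2,5,7) = root_weight (ga a) m (2,5,7)" "w (3,4,7) = root_weight (ga a) m (3,4,7)"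
    unfolding w_def root_weight_def ball_atLeastAtMost_1_7 by simp_all
  then have "q = a\<^sup>2 * t\<^sup>2 / q" "p = (a - 1)\<^sup>2 * t\<^sup>2 / p"
    using W root_weight_metric_ga[OF a g(1-3) pqt] unfolding m_def by simp_all
  then have "(p, q, t) \<in> weight_solutions a"
    using mem_weight_solutionsI[OF a W(4)] pqt by (simp add: field_simps power2_eq_square)
  with agree show ?thesis using that unfolding m_def by blast
qed

lemma soliton_weights_ga_metric_ga:
  assumes a: "a \<noteq> 0" "a \<noteq> 1" and "s \<in> weight_solutions a" and "g1 \<noteq> 0" "g2 \<noteq> 0" "g3 \<noteq> 0"
  shows "soliton_weights_ga (root_weight (ga a) (metric_ga a g1 g2 g3 s))"
proof -
  obtain p q t where s: "s = (p, q, t)" by (cases s)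
  have pqt: "p \<noteq> 0" "q \<noteq> 0" "t \<noteq> 0"
    using weight_solutions_nonzero[OF a] assms(3) unfolding s by auto
  have "p + q + t = 1/2" "q\<^sup>2 = a\<^sup>2 * t\<^sup>2" "p\<^sup>2 = (a - 1)\<^sup>2 * t\<^sup>2"
    using weight_solutions_eqs[OF a] assms(3) unfolding s by auto
  then show ?thesis
    unfolding s soliton_weights_ga_def root_weight_metric_ga[OF a assms(4-6) pqt]
    using pqt by (simp add: field_simps power2_eq_square)
qed

lemma metric_ga_nonzero:
  assumes "a \<noteq> 0" "a \<noteq> 1" and "s \<in> weight_solutions a" and "g1 \<noteq> 0" "g2 \<noteq> 0" "g3 \<noteq> 0"
  shows "\<forall>i\<in>{1..7}. metric_ga a g1 g2 g3 s i \<noteq> 0"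
  using assms weight_solutions_nonzero[OF assms(1,2)]
  by (cases s) (auto simp: metric_ga_def ball_atLeastAtMost_1_7)

lemma sigs_ga_metric_ga:
  assumes "a \<noteq> 0" "a \<noteq> 1"
  shows "sigs 7 (ga a) = {{i \<in> {1..7}. metric_ga a g1 g2 g3 s i < 0} | g1 g2 g3 s.
                           g1 \<noteq> 0 \<and> g2 \<noteq> 0 \<and> g3 \<noteq> 0 \<and> s \<in> weight_solutions a}"
proof (intro set_eqI iffI)
  fix X assume "X \<in> sigs 7 (ga a)"
  then obtain g where X: "X = {i \<in> {1..7}. g i < 0}" and nz: "\<forall>i\<in>{1..7}. g i \<noteq> 0"
    and "\<forall>l\<in>{1..7}. \<forall>j\<in>{1..7}.
           ric_op 7 (ga a) g l j = (if l = j then - 1/2 + 1/2 * nik 7 (ga a) j else 0)"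
    unfolding sigs_def by blast
  then obtain s where s: "s \<in> weight_solutions a"
    and agree: "\<forall>i\<in>{1..7}. g i = metric_ga a (g 1) (g 2) (g 3) s i"
    using soliton_weights_ga_imp_metric_ga[OF assms nz] ric_soliton_ga_iff[OF assms nz] by blast
  have "X = {i \<in> {1..7}. metric_ga a (g 1) (g 2) (g 3) s i < 0}"
    unfolding X by (rule Collect_cong) (use agree in metis)
  moreover have "g 1 \<noteq> 0" "g 2 \<noteq> 0" "g 3 \<noteq> 0" using nz by auto
  ultimately show "X \<in> {{i \<in> {1..7}. metric_ga a g1 g2 g3 s i < 0} | g1 g2 g3 s.
                           g1 \<noteq> 0 \<and> g2 \<noteq> 0 \<and> g3 \<noteq> 0 \<and> s \<in> weight_solutions a}"
    using s by blast
next
  fix X assume "X \<in> {{i \<in> {1..7}. metric_ga a g1 g2 g3 s i < 0} | g1 g2 g3 s.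
                           g1 \<noteq> 0 \<and> g2 \<noteq> 0 \<and> g3 \<noteq> 0 \<and> s \<in> weight_solutions a}"
  then obtain g1 g2 g3 s where X: "X = {i \<in> {1..7}. metric_ga a g1 g2 g3 s i < 0}"
    and nz: "g1 \<noteq> 0" "g2 \<noteq> 0" "g3 \<noteq> 0" and s: "s \<in> weight_solutions a"
    by blast
  note nz_metric = metric_ga_nonzero[OF assms s nz]
  have "soliton_weights_ga (root_weight (ga a) (metric_ga a g1 g2 g3 s))"
    by (rule soliton_weights_ga_metric_ga[OF assms s nz])
  then show "X \<in> sigs 7 (ga a)"
    unfolding sigs_def X using nz_metric ric_soliton_ga_iff[OF assms nz_metric] by blast
qed

(* The negative indices of metric_ga when g_1, g_2, g_3, p, q, t are negative exactly as
   n1, n2, n3, P, Q, T say: g_4, ..., g_7 are products, so their signs are exclusive ors. *)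
definition signature_ga :: "bool \<Rightarrow> bool \<Rightarrow> bool \<Rightarrow> bool \<Rightarrow> bool \<Rightarrow> bool \<Rightarrow> nat set" where
  "signature_ga n1 n2 n3 P Q T =
     (if n1 then {1} else {}) \<union> (if n2 then {2} else {}) \<union> (if n3 then {3} else {}) \<union>
     (if P \<noteq> (n1 \<noteq> n2) then {4} else {}) \<union> (if Q \<noteq> (n1 \<noteq> n3) then {5} else {}) \<union>
     (if T \<noteq> (n2 \<noteq> n3) then {6} else {}) \<union> (if n1 \<noteq> (n2 \<noteq> n3) then {7} else {})"

lemma mult3_less_0_iff:
  fixes x y z :: real
  assumes "x \<noteq> 0" "y \<noteq> 0" "z \<noteq> 0"
  shows "x * y * z < 0 \<longleftrightarrow> (x < 0) \<noteq> ((y < 0) \<noteq> (z < 0))"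
  using assms by (auto simp: mult_less_0_iff zero_less_mult_iff)

lemma neg_indices_metric_ga:
  assumes "a \<noteq> 0" "a \<noteq> 1" and "g1 \<noteq> 0" "g2 \<noteq> 0" "g3 \<noteq> 0" and "p \<noteq> 0" "q \<noteq> 0" "t \<noteq> 0"
  shows "{i \<in> {1..7}. metric_ga a g1 g2 g3 (p, q, t) i < 0} =
         signature_ga (g1 < 0) (g2 < 0) (g3 < 0) (p < 0) (q < 0) (t < 0)"
proof -
  have "(a - 1)\<^sup>2 > 0" "a\<^sup>2 > 0" "t\<^sup>2 > 0" using assms by simp_all
  then have "p * g1 * g2 / (a - 1)\<^sup>2 < 0 \<longleftrightarrow> p * g1 * g2 < 0"
    and "q * g1 * g3 / a\<^sup>2 < 0 \<longleftrightarrow> q * g1 * g3 < 0"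
    and "t\<^sup>2 * g1 * g2 * g3 < 0 \<longleftrightarrow> g1 * g2 * g3 < 0"
    by (simp_all add: divide_less_0_iff mult.assoc mult_less_0_iff[of "t\<^sup>2"])
  then show ?thesis
    unfolding Collect_atLeastAtMost_1_7 signature_ga_def
    using assms by (simp add: metric_ga_def mult3_less_0_iff)
qed

definition sign_pattern :: "real \<times> real \<times> real \<Rightarrow> bool \<times> bool \<times> bool" where
  "sign_pattern s = (case s of (p, q, t) \<Rightarrow> (p < 0, q < 0, t < 0))"

lemma sigs_ga:
  assumes "a \<noteq> 0" "a \<noteq> 1"
  shows "sigs 7 (ga a) = {signature_ga n1 n2 n3 P Q T | n1 n2 n3 P Q T.
                           (P, Q, T) \<in> sign_pattern ` weight_solutions a}"
  unfolding sigs_ga_metric_ga[OF assms]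
proof (intro set_eqI iffI)
  fix X assume "X \<in> {{i \<in> {1..7}. metric_ga a g1 g2 g3 s i < 0} | g1 g2 g3 s.
                          g1 \<noteq> 0 \<and> g2 \<noteq> 0 \<and> g3 \<noteq> 0 \<and> s \<in> weight_solutions a}"
  then obtain g1 g2 g3 p q t where X: "X = {i \<in> {1..7}. metric_ga a g1 g2 g3 (p, q, t) i < 0}"
    and nz: "g1 \<noteq> 0" "g2 \<noteq> 0" "g3 \<noteq> 0" and s: "(p, q, t) \<in> weight_solutions a"
    by (auto simp: split_paired_all)
  have "X = signature_ga (g1 < 0) (g2 < 0) (g3 < 0) (p < 0) (q < 0) (t < 0)"
    unfolding X using neg_indices_metric_ga[OF assms nz weight_solutions_nonzero[OF assms s]] .
  moreover have "(p < 0, q < 0, t < 0) \<in> sign_pattern ` weight_solutions a"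
    using s by (force simp: sign_pattern_def)
  ultimately show "X \<in> {signature_ga n1 n2 n3 P Q T | n1 n2 n3 P Q T.
                           (P, Q, T) \<in> sign_pattern ` weight_solutions a}"
    by blast
next
  fix X assume "X \<in> {signature_ga n1 n2 n3 P Q T | n1 n2 n3 P Q T.
                         (P, Q, T) \<in> sign_pattern ` weight_solutions a}"
  then obtain n1 n2 n3 p q t where X: "X = signature_ga n1 n2 n3 (p < 0) (q < 0) (t < 0)"
    and s: "(p, q, t) \<in> weight_solutions a"
    by (force simp: sign_pattern_def)
  define unit_sign :: "bool \<Rightarrow> real" where "unit_sign n = (if n then -1 else 1)" for n
  have "unit_sign n \<noteq> 0" "unit_sign n < 0 \<longleftrightarrow> n" for n by (simp_all add: unit_sign_def)
  then have "X = {i \<in> {1..7}.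
                  metric_ga a (unit_sign n1) (unit_sign n2) (unit_sign n3) (p, q, t) i < 0}"
    unfolding X using neg_indices_metric_ga[OF assms _ _ _ weight_solutions_nonzero[OF assms s]]
    by simp
  then show "X \<in> {{i \<in> {1..7}. metric_ga a g1 g2 g3 s i < 0} | g1 g2 g3 s.
                    g1 \<noteq> 0 \<and> g2 \<noteq> 0 \<and> g3 \<noteq> 0 \<and> s \<in> weight_solutions a}"
    using s \<open>\<And>n. unit_sign n \<noteq> 0\<close> by blast
qed

lemma sign_pattern_weight_solutions:
  shows "a < 0 \<Longrightarrow> sign_pattern ` weight_solutions a =
           {(False, False, True), (False, True, False), (False, False, False)}"
    and "0 < a \<Longrightarrow> a < 1 \<Longrightarrow> sign_pattern ` weight_solutions a =
           {(True, False, False), (False, False, False), (False, True, False)}"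
    and "1 < a \<Longrightarrow> sign_pattern ` weight_solutions a =
           {(False, False, False), (True, False, False), (False, False, True)}"
  by (simp_all add: weight_solutions_def sign_pattern_def divide_less_0_iff zero_less_divide_iff)

lemma signatures_a_neg:
  "{signature_ga n1 n2 n3 P Q T | n1 n2 n3 P Q T.
      (P, Q, T) \<in> {(False, False, True), (False, True, False), (False, False, False)}} =
   {{}, {1,2,3,5,7}, {1,2,3,6,7}, {1,2,3,7}, {1,2,6}, {1,2,5}, {1,2,5,6}, {1,3,4},
    {1,3,4,5,6}, {1,3,4,6}, {1,4,5,6,7}, {1,4,5,7}, {1,4,7}, {2,3,4}, {2,3,4,5},
    {2,3,4,5,6}, {2,4,5,6,7}, {2,4,6,7}, {2,4,7}, {3,5,6,7}, {3,5,7}, {3,6,7}, {5}, {6}}"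
  by (rule set_eqI, simp only: mem_Collect_eq insert_iff empty_iff prod.inject ex_bool_eq
      signature_ga_def simp_thms if_True if_False Un_insert_left Un_empty_left Un_empty_right, argo)

lemma signatures_a_between_0_1:
  "{signature_ga n1 n2 n3 P Q T | n1 n2 n3 P Q T.
      (P, Q, T) \<in> {(True, False, False), (False, False, False), (False, True, False)}} =
   {{}, {1,2,3,4,7}, {1,2,3,7}, {1,2,3,5,7}, {1,2,4,5,6}, {1,2,5,6}, {1,2,6},
    {1,3,4,5,6}, {1,3,4,6}, {1,3,6}, {1,4,5,7}, {1,4,7}, {1,5,7}, {2,3,4}, {2,3,4,5},
    {2,3,5}, {2,4,5,6,7}, {2,4,6,7}, {2,6,7}, {3,4,5,6,7}, {3,5,6,7}, {3,6,7}, {4}, {5}}"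
  by (rule set_eqI, simp only: mem_Collect_eq insert_iff empty_iff prod.inject ex_bool_eq
      signature_ga_def simp_thms if_True if_False Un_insert_left Un_empty_left Un_empty_right, argo)

lemma signatures_a_gt_1:
  "{signature_ga n1 n2 n3 P Q T | n1 n2 n3 P Q T.
      (P, Q, T) \<in> {(False, False, False), (True, False, False), (False, False, True)}} =
   {{}, {1,2,3,4,7}, {1,2,3,6,7}, {1,2,3,7}, {1,2,4,5,6}, {1,2,5}, {1,2,5,6}, {1,3,4},
    {1,3,4,6}, {1,3,6}, {1,4,5,6,7}, {1,4,5,7}, {1,5,7}, {2,3,4,5}, {2,3,4,5,6},
    {2,3,5}, {2,4,6,7}, {2,4,7}, {2,6,7}, {3,4,5,6,7}, {3,5,6,7}, {3,5,7}, {4}, {6}}"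
  by (rule set_eqI, simp only: mem_Collect_eq insert_iff empty_iff prod.inject ex_bool_eq
      signature_ga_def simp_thms if_True if_False Un_insert_left Un_empty_left Un_empty_right, argo)

theorem lemma2p6:
  fixes a :: real
  assumes "a \<noteq> 0" and "a \<noteq> 1"
  shows "(a < 0 \<longrightarrow> sigs 7 (ga a) =
           {{}, {1,2,3,5,7}, {1,2,3,6,7}, {1,2,3,7}, {1,2,6}, {1,2,5}, {1,2,5,6}, {1,3,4},
            {1,3,4,5,6}, {1,3,4,6}, {1,4,5,6,7}, {1,4,5,7}, {1,4,7}, {2,3,4}, {2,3,4,5},
            {2,3,4,5,6}, {2,4,5,6,7}, {2,4,6,7}, {2,4,7}, {3,5,6,7}, {3,5,7}, {3,6,7}, {5}, {6}})
       \<and> (0 < a \<and> a < 1 \<longrightarrow> sigs 7 (ga a) =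
           {{}, {1,2,3,4,7}, {1,2,3,7}, {1,2,3,5,7}, {1,2,4,5,6}, {1,2,5,6}, {1,2,6},
            {1,3,4,5,6}, {1,3,4,6}, {1,3,6}, {1,4,5,7}, {1,4,7}, {1,5,7}, {2,3,4}, {2,3,4,5},
            {2,3,5}, {2,4,5,6,7}, {2,4,6,7}, {2,6,7}, {3,4,5,6,7}, {3,5,6,7}, {3,6,7}, {4}, {5}})
       \<and> (1 < a \<longrightarrow> sigs 7 (ga a) =
           {{}, {1,2,3,4,7}, {1,2,3,6,7}, {1,2,3,7}, {1,2,4,5,6}, {1,2,5}, {1,2,5,6}, {1,3,4},
            {1,3,4,6}, {1,3,6}, {1,4,5,6,7}, {1,4,5,7}, {1,5,7}, {2,3,4,5}, {2,3,4,5,6},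
            {2,3,5}, {2,4,6,7}, {2,4,7}, {2,6,7}, {3,4,5,6,7}, {3,5,6,7}, {3,5,7}, {4}, {6}})"
  unfolding sigs_ga[OF assms]
  using sign_pattern_weight_solutions[of a]
    signatures_a_neg signatures_a_between_0_1 signatures_a_gt_1
  by simp

end
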